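(* Let $N\ge3$ and define $s(r)=\left((N-2)\int_r^\infty(\sinh\sigma)^{1-N}d\sigma\right)^{-\frac{1}{N-2}}$ for $r>0$ (so that $\frac{ds}{s^{N-1}}=\frac{dr}{(\sinh r)^{N-1}}$). Then there exist positive constants $c_1,c_2$ such that $$s(r)=c_1e^{\frac{N-1}{N-2}r}-c_2e^{-\frac{N-3}{N-2}r}+o\!\left(e^{-\frac{N-3}{N-2}r}\right)\quad\text{as }r\to\infty.$$ *)

theory Defs
  imports "HOL-Analysis.Analysis" "HOL-Library.Landau_Symbols"
begin

definition s_fun :: "nat \<Rightarrow> real \<Rightarrow> real" where
  "s_fun N r = ((real N - 2) * integral {r..} (\<lambda>\<sigma>. 1 / (sinh \<sigma>) ^ (N - 1)))
                 powr (- 1 / (real N - 2))"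

end

theory Submission
  imports Defs "HOL-Real_Asymp.Real_Asymp"
begin

text \<open>With m = N - 1 and \<sigma> \<ge> 1, the integrand sinh(\<sigma>)^(-m) = 2^m e^(-m\<sigma>) (1 - e^(-2\<sigma>))^(-m)
  lies between the first two and the first three terms of its binomial expansion, so the tail
  integral equals 2^m/m e^(-mr) (1 + t(r)) with t(r) = m^2/(m+2) e^(-2r) + O(e^(-4r)).
  Raising it to the power -p = -1/(N-2) and expanding (1 + t)^(-p) = 1 - p t + O(t^2) gives
  s(r) = c1 e^((N-1)r/(N-2)) (1 - p m^2/(m+2) e^(-2r) + O(e^(-4r))), and
  e^((N-1)r/(N-2)) e^(-2r) = e^(-(N-3)r/(N-2)).\<close>

lemma inverse_one_minus_power_bounds:
  fixes y :: real and m :: nat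
  assumes "0 \<le> y" "y \<le> 1/2"
  shows "1 + real m * y \<le> 1 / (1 - y) ^ m"
    and "1 / (1 - y) ^ m \<le> 1 + real m * y + real m ^ 2 * 2 ^ m * y ^ 2"
proof -
  have pos: "0 < (1 - y) ^ m" using assms by simp
  have "(1 + real m * y) * (1 - y) ^ m \<le> (1 + y) ^ m * (1 - y) ^ m"
    using Bernoulli_inequality[of y m] assms by (intro mult_right_mono) auto
  also have "\<dots> = (1 - y\<^sup>2) ^ m"
    by (simp add: power_mult_distrib[symmetric] algebra_simps power2_eq_square)
  also have "\<dots> \<le> 1"
    using assms by (intro power_le_one) (auto simp: power2_eq_square mult_le_one)
  finally show "1 + real m * y \<le> 1 / (1 - y) ^ m"
    using pos by (simp add: field_simps)
  have "1 - real m ^ 2 * y ^ 2 = (1 - real m * y) * (1 + real m * y)"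
    by (simp add: algebra_simps power2_eq_square)
  also have "\<dots> \<le> (1 - y) ^ m * (1 + real m * y)"
    using Bernoulli_inequality[of "-y" m] assms by (intro mult_right_mono) auto
  finally have lin: "1 - real m ^ 2 * y ^ 2 \<le> (1 - y) ^ m * (1 + real m * y)" .
  have "real m ^ 2 * y ^ 2 = (1/2) ^ m * (real m ^ 2 * 2 ^ m * y ^ 2)"
    by (simp add: power_divide)
  also have "\<dots> \<le> (1 - y) ^ m * (real m ^ 2 * 2 ^ m * y ^ 2)"
    using assms by (intro mult_right_mono power_mono) auto
  finally have "1 \<le> (1 - y) ^ m * (1 + real m * y + real m ^ 2 * 2 ^ m * y ^ 2)"
    using lin by (simp add: algebra_simps)
  then show "1 / (1 - y) ^ m \<le> 1 + real m * y + real m ^ 2 * 2 ^ m * y ^ 2"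
    using pos by (simp add: field_simps)
qed

lemma inverse_sinh_power_bounds:
  fixes m :: nat and \<sigma> :: real
  assumes "\<sigma> \<ge> 1"
  shows "2^m * exp (- real m * \<sigma>) + 2^m * real m * exp (- (real m + 2) * \<sigma>) \<le> 1 / sinh \<sigma> ^ m"
    and "1 / sinh \<sigma> ^ m \<le> 2^m * exp (- real m * \<sigma>) + 2^m * real m * exp (- (real m + 2) * \<sigma>)
                               + real m ^ 2 * 4^m * exp (- (real m + 4) * \<sigma>)"
proof -
  define e where "e = exp (- \<sigma>)"
  have e0: "e > 0" by (simp add: e_def)
  have "e\<^sup>2 = exp (- 2 * \<sigma>)" by (simp add: e_def power2_eq_square flip: exp_add)
  also have "\<dots> \<le> exp (- 2)" using assms by simp
  also have "\<dots> \<le> 1/2"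
    using exp_ge_add_one_self[of 2] by (simp add: exp_minus field_simps)
  finally have e2: "e\<^sup>2 \<le> 1/2" .
  have exp_e: "exp (- real n * \<sigma>) = e ^ n" for n
    unfolding e_def by (simp flip: exp_of_nat_mult)
  have "sinh \<sigma> = (1 - e\<^sup>2) / (2 * e)"
    using e0 by (simp add: sinh_def e_def exp_minus field_simps power2_eq_square)
  then have sinh_e: "1 / sinh \<sigma> ^ m = (2 * e) ^ m * (1 / (1 - e\<^sup>2) ^ m)"
    by (simp add: power_divide)
  have exps: "exp (- real m * \<sigma>) = e ^ m" "exp (- (real m + 2) * \<sigma>) = e ^ (m + 2)"
    "exp (- (real m + 4) * \<sigma>) = e ^ (m + 4)"
    using exp_e[of m] exp_e[of "m + 2"] exp_e[of "m + 4"] by (simp_all add: add.commute)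
  have scale: "(2 * e) ^ m * x = 2^m * e^m * x" for x :: real
    by (simp add: power_mult_distrib)
  note bounds = inverse_one_minus_power_bounds[of "e\<^sup>2" m]
  have "(2 * e) ^ m * (1 + real m * e\<^sup>2) \<le> 1 / sinh \<sigma> ^ m"
    unfolding sinh_e using bounds(1) e0 e2 by (intro mult_left_mono) auto
  then show "2^m * exp (- real m * \<sigma>) + 2^m * real m * exp (- (real m + 2) * \<sigma>) \<le> 1 / sinh \<sigma> ^ m"
    unfolding exps scale by (simp add: algebra_simps power_add power2_eq_square)
  have "1 / sinh \<sigma> ^ m \<le> (2 * e) ^ m * (1 + real m * e\<^sup>2 + real m ^ 2 * 2^m * (e\<^sup>2)\<^sup>2)"
    unfolding sinh_e using bounds(2) e0 e2 by (intro mult_left_mono) auto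
  moreover have "(4::real) ^ m = 2 ^ m * 2 ^ m" by (simp flip: power_mult_distrib)
  ultimately show "1 / sinh \<sigma> ^ m \<le> 2^m * exp (- real m * \<sigma>) + 2^m * real m * exp (- (real m + 2) * \<sigma>)
                               + real m ^ 2 * 4^m * exp (- (real m + 4) * \<sigma>)"
    unfolding exps scale by (simp add: algebra_simps power_add power2_eq_square power4_eq_xxxx)
qed

lemma integral_bounds_nonneg_continuous:
  fixes f g h :: "'a::euclidean_space \<Rightarrow> real"
  assumes "continuous_on S f" "S \<in> sets lebesgue"
    and "(g has_integral G) S" "(h has_integral H) S"
    and "\<And>x. x \<in> S \<Longrightarrow> 0 \<le> g x \<and> g x \<le> f x \<and> f x \<le> h x"
  shows "G \<le> integral S f" "integral S f \<le> H"
proof -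
  have "f integrable_on S"
  proof (rule measurable_bounded_by_integrable_imp_integrable_real[where g = h])
    show "f \<in> borel_measurable (lebesgue_on S)"
      using assms(1,2) by (rule continuous_imp_measurable_on_sets_lebesgue)
  qed (use assms in \<open>force+\<close>)
  then show "G \<le> integral S f" "integral S f \<le> H"
    using assms(3-5) by (auto intro: has_integral_le)
qed

lemma integral_inverse_sinh_power_bounds:
  fixes m :: nat and r :: real
  assumes "m \<ge> 1" "r \<ge> 1"
  defines "G \<equiv> 2^m * exp (- real m * r) / real m
               + 2^m * real m * exp (- (real m + 2) * r) / (real m + 2)"
  shows "G \<le> integral {r..} (\<lambda>\<sigma>. 1 / sinh \<sigma> ^ m)"
    and "integral {r..} (\<lambda>\<sigma>. 1 / sinh \<sigma> ^ m)
           \<le> G + real m ^ 2 * 4^m * exp (- (real m + 4) * r) / (real m + 4)"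
proof -
  have exp_int: "((\<lambda>\<sigma>. exp (- (real m + c) * \<sigma>))
                    has_integral exp (- (real m + c) * r) / (real m + c)) {r..}"
    if "c \<ge> 0" for c :: real
    using has_integral_exp_minus_to_infinity[of "real m + c" r] assms(1) that by simp
  define g where "g \<sigma> = 2^m * exp (- real m * \<sigma>) + 2^m * real m * exp (- (real m + 2) * \<sigma>)"
    for \<sigma> :: real
  define h where "h \<sigma> = g \<sigma> + real m ^ 2 * 4^m * exp (- (real m + 4) * \<sigma>)" for \<sigma> :: real
  have "(g has_integral G) {r..}"
    unfolding g_def G_def
    using has_integral_add[OF has_integral_mult_right[OF exp_int[of 0, simplified]]
                              has_integral_mult_right[OF exp_int[of 2]]]
    by simp
  moreover have "(h has_integral G + real m ^ 2 * 4^m * exp (- (real m + 4) * r) / (real m + 4)) {r..}"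
    unfolding h_def
    using has_integral_add[OF \<open>(g has_integral G) {r..}\<close> has_integral_mult_right[OF exp_int[of 4]]]
    by simp
  moreover have "continuous_on {r..} (\<lambda>\<sigma>. 1 / sinh \<sigma> ^ m)"
    using assms(2) by (intro continuous_intros) auto
  moreover have "0 \<le> g \<sigma> \<and> g \<sigma> \<le> 1 / sinh \<sigma> ^ m \<and> 1 / sinh \<sigma> ^ m \<le> h \<sigma>"
    if "\<sigma> \<in> {r..}" for \<sigma>
    using inverse_sinh_power_bounds[of \<sigma> m] that assms(2) unfolding g_def h_def by auto
  ultimately show "G \<le> integral {r..} (\<lambda>\<sigma>. 1 / sinh \<sigma> ^ m)"
    and "integral {r..} (\<lambda>\<sigma>. 1 / sinh \<sigma> ^ m)
           \<le> G + real m ^ 2 * 4^m * exp (- (real m + 4) * r) / (real m + 4)"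
    using integral_bounds_nonneg_continuous[of "{r..}"] by auto
qed

definition sinh_tail_defect :: "nat \<Rightarrow> real \<Rightarrow> real" where
  "sinh_tail_defect m r = real m / 2^m * exp (real m * r) * integral {r..} (\<lambda>\<sigma>. 1 / sinh \<sigma> ^ m) - 1"

lemma sinh_tail_defect_asymptotics:
  fixes m :: nat
  assumes "m \<ge> 1"
  shows "\<forall>\<^sub>F r in at_top. sinh_tail_defect m r > 0"
    and "(\<lambda>r. sinh_tail_defect m r - real m ^ 2 / (real m + 2) * exp (- 2 * r)) \<in> O(\<lambda>r. exp (- 4 * r))"
proof -
  define t where "t = sinh_tail_defect m"
  define J where "J r = integral {r..} (\<lambda>\<sigma>. 1 / sinh \<sigma> ^ m)" for r :: real
  define G where "G r = 2^m * exp (- real m * r) / real m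
                        + 2^m * real m * exp (- (real m + 2) * r) / (real m + 2)" for r
  define C where "C = real m ^ 3 * 2^m / (real m + 4)"
  have m0: "real m > 0" using assms(1) by simp
  have G_scaled: "real m / 2^m * exp (real m * r) * G r = 1 + real m ^ 2 / (real m + 2) * exp (- 2 * r)"
    for r
  proof -
    have "exp (real m * r) * exp (- real m * r) = 1"
      and "exp (real m * r) * exp (- (real m + 2) * r) = exp (- 2 * r)"
      by (simp_all flip: exp_add add: algebra_simps)
    then show ?thesis
      unfolding G_def using m0 by (simp add: distrib_left power2_eq_square mult.assoc mult.left_commute)
  qed
  have remainder: "t r - real m ^ 2 / (real m + 2) * exp (- 2 * r)
                     = real m / 2^m * exp (real m * r) * (J r - G r)" for r
    unfolding t_def sinh_tail_defect_def J_def[symmetric] right_diff_distrib G_scaled by simp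
  have bounds: "0 \<le> t r - real m ^ 2 / (real m + 2) * exp (- 2 * r)
                \<and> t r - real m ^ 2 / (real m + 2) * exp (- 2 * r) \<le> C * exp (- 4 * r)"
    if "r \<ge> 1" for r
  proof -
    have "real m / 2^m * exp (real m * r) * (real m ^ 2 * 4^m * exp (- (real m + 4) * r) / (real m + 4))
            = C * exp (- 4 * r)"
    proof -
      have "(4::real) ^ m = 2^m * 2^m" by (simp flip: power_mult_distrib)
      moreover have "exp (real m * r) * exp (- (real m + 4) * r) = exp (- 4 * r)"
        by (simp flip: exp_add add: algebra_simps)
      ultimately show ?thesis
        unfolding C_def by (simp add: power2_eq_square power3_eq_cube mult.assoc mult.left_commute)
    qed
    moreover have "0 \<le> J r - G r"
      and "J r - G r \<le> real m ^ 2 * 4^m * exp (- (real m + 4) * r) / (real m + 4)"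
      using integral_inverse_sinh_power_bounds[OF assms(1) that] unfolding J_def G_def by simp_all
    moreover have "0 \<le> real m / 2^m * exp (real m * r)" by simp
    ultimately show ?thesis
      unfolding remainder by (metis mult_left_mono mult_nonneg_nonneg)
  qed
  show "(\<lambda>r. sinh_tail_defect m r - real m ^ 2 / (real m + 2) * exp (- 2 * r)) \<in> O(\<lambda>r. exp (- 4 * r))"
    using bounds unfolding t_def
    by (intro bigoI[where c = C] eventually_mono[OF eventually_ge_at_top[of 1]]) auto
  have "0 < real m ^ 2 / (real m + 2) * exp (- 2 * r)" for r
    using m0 by simp
  then show "\<forall>\<^sub>F r in at_top. sinh_tail_defect m r > 0"
    using bounds unfolding t_def
    by (intro eventually_mono[OF eventually_ge_at_top[of 1]]) (smt (verit))
qed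

lemma one_plus_powr_minus_taylor_bigo:
  fixes p :: real
  assumes "p > 0"
  shows "(\<lambda>x. (1 + x) powr (- p) - (1 - p * x)) \<in> O[at_right 0](\<lambda>x. x ^ 2)"
  using assms by real_asymp

lemma one_plus_powr_minus_expansion:
  fixes t g :: "'a \<Rightarrow> real" and p \<alpha> :: real
  assumes "p > 0" "(g \<longlongrightarrow> 0) F" "\<forall>\<^sub>F x in F. t x > 0"
    and "(\<lambda>x. t x - \<alpha> * g x) \<in> O[F](\<lambda>x. g x ^ 2)"
  shows "(\<lambda>x. (1 + t x) powr (- p) - (1 - p * \<alpha> * g x)) \<in> O[F](\<lambda>x. g x ^ 2)"
proof -
  have g_small: "g \<in> o[F](\<lambda>_. 1)"
    using assms(2) by (intro smalloI_tendsto) auto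
  have "(\<lambda>x. g x * g x) \<in> O[F](\<lambda>x. 1 * g x)"
    using landau_o.small_imp_big[OF g_small] by (intro landau_o.big.mult) auto
  then have g_square: "(\<lambda>x. g x ^ 2) \<in> O[F](g)"
    by (simp add: power2_eq_square)
  have "(\<lambda>x. (t x - \<alpha> * g x) + \<alpha> * g x) \<in> O[F](g)"
    by (intro sum_in_bigo landau_o.big_trans[OF assms(4) g_square]) auto
  then have t_big: "t \<in> O[F](g)" by simp
  have "((\<lambda>x. t x / 1) \<longlongrightarrow> 0) F"
    using landau_o.big_small_trans[OF t_big g_small] by (rule smalloD_tendsto)
  then have "filterlim t (at_right 0) F"
    using assms(3) by (intro tendsto_imp_filterlim_at_right) auto
  then have "(\<lambda>x. (1 + t x) powr (- p) - (1 - p * t x)) \<in> O[F](\<lambda>x. t x ^ 2)"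
    by (rule landau_o.big.compose[OF one_plus_powr_minus_taylor_bigo[OF assms(1)]])
  also have "(\<lambda>x. t x ^ 2) \<in> O[F](\<lambda>x. g x ^ 2)"
    using t_big by (rule landau_o.big_power)
  finally have taylor: "(\<lambda>x. (1 + t x) powr (- p) - (1 - p * t x)) \<in> O[F](\<lambda>x. g x ^ 2)" .
  have "(\<lambda>x. p * (t x - \<alpha> * g x)) \<in> O[F](\<lambda>x. g x ^ 2)"
    using assms(4) by simp
  from sum_in_bigo(2)[OF taylor this] show ?thesis
    by (simp add: algebra_simps)
qed

lemma scaled_expansion_smallo:
  fixes u g E :: "'a \<Rightarrow> real"
  assumes "(\<lambda>x. u x - (1 - \<beta> * g x)) \<in> O[F](\<lambda>x. g x ^ 2)" "(g \<longlongrightarrow> 0) F"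
  shows "(\<lambda>x. c * E x * u x - (c * E x - c * \<beta> * (E x * g x))) \<in> o[F](\<lambda>x. E x * g x)"
proof -
  have "(\<lambda>x. g x * g x) \<in> o[F](\<lambda>x. 1 * g x)"
    using assms(2) by (intro landau_o.small_big_mult smalloI_tendsto landau_o.big_refl) auto
  with assms(1) have "(\<lambda>x. u x - (1 - \<beta> * g x)) \<in> o[F](g)"
    by (simp add: power2_eq_square landau_o.big_small_trans)
  then have "(\<lambda>x. c * (E x * (u x - (1 - \<beta> * g x)))) \<in> o[F](\<lambda>x. E x * g x)"
    by (cases "c = 0") (simp_all add: landau_o.small.mult_left)
  then show ?thesis
    by (simp add: algebra_simps)
qed

lemma s_fun_factorization:
  fixes N :: nat and r :: real
  assumes "N \<ge> 3" "sinh_tail_defect (N - 1) r > -1"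
  shows "s_fun N r = ((real N - 2) * 2^(N - 1) / (real N - 1)) powr (- 1 / (real N - 2))
                     * exp ((real N - 1) / (real N - 2) * r)
                     * (1 + sinh_tail_defect (N - 1) r) powr (- 1 / (real N - 2))"
proof -
  define m where "m = N - 1"
  define t where "t = sinh_tail_defect m r"
  define K where "K = (real N - 2) * 2^m / real m"
  define q where "q = - 1 / (real N - 2)"
  have m: "real m = real N - 1" "real m > 0" using assms(1) by (auto simp: m_def of_nat_diff)
  have K: "K > 0" using assms(1) m(2) by (simp add: K_def)
  have "(real N - 2) * integral {r..} (\<lambda>\<sigma>. 1 / sinh \<sigma> ^ m) = K * exp (- real m * r) * (1 + t)"
    unfolding t_def sinh_tail_defect_def K_def using m(2) by (simp add: field_simps exp_minus)
  then have "s_fun N r = (K * exp (- real m * r) * (1 + t)) powr q"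
    unfolding s_fun_def m_def q_def by simp
  also have "\<dots> = K powr q * exp (- real m * r) powr q * (1 + t) powr q"
    using K assms(2) by (simp add: powr_mult t_def m_def)
  also have "exp (- real m * r) powr q = exp ((real N - 1) / (real N - 2) * r)"
  proof -
    have "q * (- real m * r) = (real N - 1) / (real N - 2) * r"
      unfolding q_def using m(1) by simp (metis minus_diff_eq minus_divide_left mult_minus_left)
    then show ?thesis by (simp add: powr_def)
  qed
  finally show ?thesis unfolding K_def q_def t_def m_def m(1)[unfolded m_def] .
qed

theorem lemma6p4:
  fixes N :: nat
  assumes "N \<ge> 3"
  shows "\<exists>c1 c2 :: real. c1 > 0 \<and> c2 > 0 \<and>
    (\<lambda>r. s_fun N r - (c1 * exp ((real N - 1) / (real N - 2) * r)
                       - c2 * exp (- ((real N - 3) / (real N - 2)) * r)))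
      \<in> o[at_top](\<lambda>r. exp (- ((real N - 3) / (real N - 2)) * r))"
proof -
  define m where "m = N - 1"
  define p where "p = 1 / (real N - 2)"
  define \<alpha> where "\<alpha> = real m ^ 2 / (real m + 2)"
  define c1 where "c1 = ((real N - 2) * 2^m / (real N - 1)) powr (- p)"
  define E where "E r = exp ((real N - 1) / (real N - 2) * r)" for r
  define F where "F r = exp (- ((real N - 3) / (real N - 2)) * r)" for r
  have m: "m \<ge> 1" "real m > 0" and p: "p > 0" and c1: "c1 > 0"
    using assms by (auto simp: m_def p_def c1_def)
  have E_F: "E r * exp (- 2 * r) = F r" for r
    unfolding E_def F_def using assms by (simp add: field_simps flip: exp_add)
  note defect = sinh_tail_defect_asymptotics[OF m(1)]
  have "(\<lambda>r. (1 + sinh_tail_defect m r) powr (- p) - (1 - p * \<alpha> * exp (- 2 * r)))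
          \<in> O(\<lambda>r. exp (- 2 * r) ^ 2)"
    using defect unfolding \<alpha>_def
    by (intro one_plus_powr_minus_expansion p) (real_asymp, simp_all flip: exp_of_nat_mult exp_add)
  then have "(\<lambda>r. c1 * E r * (1 + sinh_tail_defect m r) powr (- p)
                    - (c1 * E r - c1 * (p * \<alpha>) * F r)) \<in> o(F)"
    unfolding E_F[symmetric] by (rule scaled_expansion_smallo) real_asymp
  moreover have "\<forall>\<^sub>F r in at_top. s_fun N r = c1 * E r * (1 + sinh_tail_defect m r) powr (- p)"
    using defect(1) by eventually_elim (simp add: s_fun_factorization assms c1_def E_def p_def m_def)
  ultimately have "(\<lambda>r. s_fun N r - (c1 * E r - c1 * (p * \<alpha>) * F r)) \<in> o(F)"
    by (subst landau_o.small.in_cong) (auto elim: eventually_mono)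
  moreover have "c1 * (p * \<alpha>) > 0" using c1 p m by (simp add: \<alpha>_def)
  ultimately show ?thesis using c1 unfolding E_def F_def by blast
qed

end
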